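(* Fix a positive integer $k$ and let $a_n=\left\lceil \frac{2^{n+k-1}}{2^k+1}\right\rceil$ for $n\ge 1$. Then the sequence $(\Gamma(a_n,a_{n+1}))_{n\ge 1}$ is $$\underbrace{1,\ldots,1}_{k},\underbrace{2,\ldots,2}_{k},\underbrace{1,\ldots,1}_{k},\underbrace{2,\ldots,2}_{k},\ldots,$$ i.e., it consists of alternating blocks of $k$ ones and $k$ twos, starting with a block of ones.
   Context: For relatively prime positive integers $p,q$, exactly one of the equations $px+qy=\frac{(p-1)(q-1)}{2}$ (Equation 1) and $px+qy+1=\frac{(p-1)(q-1)}{2}$ (Equation 2) has a solution in nonnegative integers $(x,y)$. For positive integers $a,b$ with $d=\gcd(a,b)$, $\Gamma(a,b)=1$ if Equation 1 with $(p,q)=(a/d,b/d)$ has a nonnegative integer solution, and $\Gamma(a,b)=2$ otherwise. *)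

theory Defs
  imports Complex_Main
begin

text \<open>The right-hand side (p-1)(q-1)/2 is taken as a rational number; an integer solution requires it
  to be an integer.\<close>
definition eq1_solvable :: "nat \<Rightarrow> nat \<Rightarrow> bool" where
  "eq1_solvable p q \<longleftrightarrow>
     (\<exists>x y :: nat. (of_nat (p * x + q * y) :: rat) = of_nat ((p - 1) * (q - 1)) / 2)"

definition Gamma :: "nat \<Rightarrow> nat \<Rightarrow> nat" where
  "Gamma a b = (let d = gcd a b in if eq1_solvable (a div d) (b div d) then 1 else 2)"

definition seq_a :: "nat \<Rightarrow> nat \<Rightarrow> nat" where
  "seq_a k n = nat \<lceil>(2::real) ^ (n + k - 1) / (2 ^ k + 1)\<rceil>"

end

theory Submission
  imports Defs "HOL-Number_Theory.Cong"
begin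

(* Let m = 2^k + 1, so that a_n = ceil (2^N / m) with N = n + k - 1.  Doubling the numerator
   gives a_(n+1) = 2 a_n or 2 a_n - 1, according to whether the residue (- 2^N) mod m is below
   or above m / 2.  Writing N = k e + i with i < k, the congruence 2^k = -1 (mod m) makes this
   residue 2^i for odd e and m - 2^i for even e; since e = (n - 1) div k + 1, the two cases
   alternate in blocks of length k.  Finally Gamma a (2 a) = 1, as x + 2 y = 0 is solvable,
   while Gamma a (2 a - 1) = 2 for a >= 2: a solution of a x + (2 a - 1) y = (a - 1)^2 would
   have y = -1 (mod a), hence y >= a - 1, which makes the left-hand side too large. *)

lemma ceiling_double_divide:
  fixes a b :: int
  shows "\<lceil>of_int (2 * a) / of_int b :: real\<rceil> = 2 * \<lceil>of_int a / of_int b :: real\<rceil> - 2 * (- a mod b) div b"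
proof -
  have "- (2 * a) = 2 * (- a mod b) + b * (2 * (- a div b))"
    using mult_div_mod_eq [of b "- a"] by (simp only: mult.left_commute [of b 2])
  then have "- (2 * a) div b = 2 * (- a mod b) div b + 2 * (- a div b)"
    by (cases "b = 0") simp_all
  then show ?thesis
    unfolding ceiling_divide_eq_div by simp
qed

lemma neg_pow2_mod:
  fixes e i k :: nat
  assumes "i < k"
  shows "- (2 ^ (k * e + i)) mod (2 ^ k + 1 :: int) = (if odd e then 2 ^ i else 2 ^ k + 1 - 2 ^ i)"
proof -
  define m :: int where "m = 2 ^ k + 1"
  have "[2 ^ k = - 1] (mod m)"
    by (simp add: m_def cong_iff_dvd_diff)
  then have "[(2 ^ k) ^ e * 2 ^ i = (- 1) ^ e * 2 ^ i] (mod m)"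
    by (intro cong_mult cong_pow cong_refl)
  then have cong: "[- (2 ^ (k * e + i)) = - ((- 1) ^ e * 2 ^ i)] (mod m)"
    by (simp add: cong_minus_minus_iff power_add power_mult)
  have pow_bounds: "0 < (2::int) ^ i" "(2::int) ^ i < 2 ^ k"
    using assms by simp_all
  show ?thesis
  proof (cases "odd e")
    case True
    with cong have "[- (2 ^ (k * e + i)) = 2 ^ i] (mod m)"
      by simp
    then show ?thesis
      using pow_bounds True by (simp add: cong_def m_def)
  next
    case False
    with cong have "[- (2 ^ (k * e + i)) = m - 2 ^ i] (mod m)"
      by (simp add: cong_def)
    then have "- (2 ^ (k * e + i)) mod m = (m - 2 ^ i) mod m"
      unfolding cong_def .
    also have "\<dots> = m - 2 ^ i"
      using pow_bounds unfolding m_def by (intro mod_pos_pos_trivial) linarith+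
    finally show ?thesis
      using False unfolding m_def [symmetric] by simp
  qed
qed

lemma double_neg_pow2_mod_div:
  fixes e i k :: nat
  assumes "i < k"
  shows "2 * (- (2 ^ (k * e + i)) mod (2 ^ k + 1)) div (2 ^ k + 1 :: int) = (if odd e then 0 else 1)"
proof -
  define m :: int where "m = 2 ^ k + 1"
  have "(2::int) * 2 ^ i \<le> 2 ^ k" "(0::int) < 2 ^ i"
    using assms power_increasing [of "Suc i" k "2::int"] by simp_all
  then have m_bounds: "0 < m" "0 \<le> m - 2 * 2 ^ i" "m - 2 * 2 ^ i < m" "2 * 2 ^ i < m"
    unfolding m_def by linarith+
  then have small_div: "(m - 2 * 2 ^ i) div m = 0" "2 * 2 ^ i div m = 0"
    by (simp_all add: div_pos_pos_trivial)
  have "2 * (m - 2 ^ i) div m = (m - 2 * 2 ^ i + m) div m"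
    by (simp add: algebra_simps)
  also have "\<dots> = (m - 2 * 2 ^ i) div m + 1"
    using \<open>0 < m\<close> by (intro div_add_self2) simp
  finally show ?thesis
    using small_div neg_pow2_mod [OF assms, of e] unfolding m_def [symmetric] by simp
qed

lemma seq_a_pos: "seq_a k n > 0"
proof -
  have "(0::real) < 2 ^ (n + k - 1) / (2 ^ k + 1)"
    by (simp add: add_pos_pos)
  then show ?thesis
    by (simp add: seq_a_def)
qed

lemma seq_a_ge_two:
  assumes "k \<ge> 1" "n \<ge> 2"
  shows "seq_a k n \<ge> 2"
proof -
  have "(2::real) ^ (k + 1) \<le> 2 ^ (n + k - 1)"
    using assms by (intro power_increasing) simp_all
  moreover have "(2::real) ^ k \<ge> 2"
    using assms power_increasing [of 1 k "2::real"] by simp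
  ultimately have "1 < (2::real) ^ (n + k - 1) / (2 ^ k + 1)"
    by simp
  then show ?thesis
    unfolding seq_a_def by linarith
qed

lemma seq_a_Suc:
  assumes "k \<ge> 1" "n \<ge> 1"
  shows "seq_a k (Suc n) = 2 * seq_a k n - (if even ((n - 1) div k) then 0 else 1)"
proof -
  obtain p where n: "n = Suc p"
    using assms by (cases n) simp_all
  define N where "N = n + k - 1"
  define c where "c = \<lceil>of_int (2 ^ N) / of_int (2 ^ k + 1) :: real\<rceil>"
  have "N div k = Suc ((n - 1) div k)"
    using assms n by (simp add: N_def)
  moreover have "k * (N div k) + N mod k = N"
    by (rule mult_div_mod_eq)
  ultimately have "2 * (- (2 ^ N) mod (2 ^ k + 1)) div (2 ^ k + 1 :: int)
      = (if even ((n - 1) div k) then 0 else 1)"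
    using double_neg_pow2_mod_div [of "N mod k" k "N div k"] assms by simp
  then have "\<lceil>of_int (2 * 2 ^ N) / of_int (2 ^ k + 1) :: real\<rceil>
      = 2 * c - (if even ((n - 1) div k) then 0 else 1)"
    unfolding ceiling_double_divide c_def by simp
  moreover have "seq_a k (Suc n) = nat \<lceil>of_int (2 * 2 ^ N) / of_int (2 ^ k + 1) :: real\<rceil>"
    using n by (simp add: seq_a_def N_def)
  ultimately have "seq_a k (Suc n) = nat (2 * c - (if even ((n - 1) div k) then 0 else 1))"
    by simp
  moreover have "seq_a k n = nat c"
    by (simp add: seq_a_def c_def N_def)
  moreover from this have "c > 0"
    using seq_a_pos [of k n] by simp
  ultimately show ?thesis
    by (cases "even ((n - 1) div k)") simp_all
qed

lemma Gamma_double: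
  assumes "a > 0"
  shows "Gamma a (2 * a) = 1"
proof -
  have "eq1_solvable 1 2"
    unfolding eq1_solvable_def by (rule exI [of _ 0], rule exI [of _ 0]) simp
  then show ?thesis
    using assms by (simp add: Gamma_def)
qed

lemma not_eq1_solvable_double_minus_one:
  assumes "a \<ge> 2"
  shows "\<not> eq1_solvable a (2 * a - 1)"
proof
  assume "eq1_solvable a (2 * a - 1)"
  then obtain x y :: nat
    where sol: "(of_nat (a * x + (2 * a - 1) * y) :: rat) = of_nat ((a - 1) * (2 * a - 1 - 1)) / 2"
    unfolding eq1_solvable_def by blast
  have "(a - 1) * (2 * a - 1 - 1) = 2 * (a - 1) ^ 2"
    by (simp add: power2_eq_square right_diff_distrib')
  then have "(of_nat ((a - 1) * (2 * a - 1 - 1)) :: rat) / 2 = of_nat ((a - 1) ^ 2)"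
    by simp
  with sol have "(of_nat (a * x + (2 * a - 1) * y) :: rat) = of_nat ((a - 1) ^ 2)"
    by (rule trans)
  then have "a * x + (2 * a - 1) * y = (a - 1) ^ 2"
    by (simp only: of_nat_eq_iff)
  then have "int (a * x + (2 * a - 1) * y) = int ((a - 1) ^ 2)"
    by (rule arg_cong)
  then have "int a * x + (2 * int a - 1) * y = (int a - 1) ^ 2"
    using assms by (simp add: of_nat_diff)
  then have "int y + 1 = int a * (int x + 2 * int y - int a + 2)"
    by (simp add: algebra_simps power2_eq_square)
  then have "int a dvd int (y + 1)"
    unfolding of_nat_add of_nat_1 by simp
  then have "a dvd y + 1"
    by (simp only: int_dvd_int_iff)
  then have "a \<le> y + 1"
    by (rule dvd_imp_le) simp
  then have "(2 * int a - 1) * (int a - 1) \<le> (2 * int a - 1) * y"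
    using assms by (intro mult_left_mono) simp_all
  moreover have "(2 * int a - 1) * (int a - 1) = (int a - 1) ^ 2 + int a * (int a - 1)"
    by (simp add: algebra_simps power2_eq_square)
  moreover have "0 < int a * (int a - 1)"
    using assms by simp
  moreover have "0 \<le> int a * int x"
    by simp
  ultimately show False
    using \<open>int a * x + (2 * int a - 1) * y = (int a - 1) ^ 2\<close> by linarith
qed

lemma Gamma_double_minus_one:
  assumes "a \<ge> 2"
  shows "Gamma a (2 * a - 1) = 2"
proof -
  have "gcd a (2 * a - 1) dvd 2 * a - (2 * a - 1)"
    by (simp add: dvd_diff_nat)
  moreover have "2 * a - (2 * a - 1) = 1"
    using assms by simp
  ultimately have "gcd a (2 * a - 1) = 1"
    by simp
  then show ?thesis
    using not_eq1_solvable_double_minus_one [OF assms] by (simp add: Gamma_def)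
qed

theorem theorem1p3:
  fixes k :: nat
  assumes "k \<ge> 1"
  shows "\<forall>n\<ge>1. Gamma (seq_a k n) (seq_a k (n + 1)) = (if even ((n - 1) div k) then 1 else 2)"
proof (intro allI impI)
  fix n :: nat
  assume "n \<ge> 1"
  show "Gamma (seq_a k n) (seq_a k (n + 1)) = (if even ((n - 1) div k) then 1 else 2)"
  proof (cases "even ((n - 1) div k)")
    case True
    then show ?thesis
      using seq_a_Suc [OF assms \<open>n \<ge> 1\<close>] Gamma_double [OF seq_a_pos] by simp
  next
    case False
    then have "(n - 1) div k \<noteq> 0"
      by (metis even_zero)
    then have "n \<ge> 2"
      using assms by (simp add: div_eq_0_iff)
    then show ?thesis
      using False seq_a_Suc [OF assms \<open>n \<ge> 1\<close>] Gamma_double_minus_one [OF seq_a_ge_two [OF assms]]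
      by simp
  qed
qed

end
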